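(* Let $L$ be the lattice of IHS manifolds of a given deformation type, $M$ a lattice of signature $(1,t)$ with a primitive embedding $j\colon M\hookrightarrow L$, and $N=j(M)^\perp$. If $\mathrm{Mo}^2(L)\supset\tilde{SO}^+(L)$, then $\Gamma_{M,j}$ is an arithmetic subgroup of $O(N)$.
   Context: $\mathrm{Mo}^2(L)=\phi\,\mathrm{Mo}^2(X)\,\phi^{-1}\subset O(L)$ is the monodromy group of the IHS manifolds transported to $L$ by a marking $\phi$. $\mathrm{Mo}^2(M,j)=\{g\in\mathrm{Mo}^2(L):g|_{j(M)}=\mathrm{id}\}$ and $\Gamma_{M,j}\subset O(N)$ is its image under restriction to $N$. For a lattice $\Lambda$ with discriminant group $A_\Lambda=\Lambda^*/\Lambda$: $\tilde O^+(\Lambda)=\{g\in O(\Lambda): g|_{A_\Lambda}=\mathrm{id}$, real spinor norm of $g$ equal to $1\}$, where the real spinor norm of $g=\rho_{v_1}\cdots\rho_{v_m}$ (reflections, $v_i\in\Lambda_{\mathbb R}$) is $\prod(-v_i^2/2)$ modulo squares; $\tilde{SO}^+(\Lambda)=\{g\in\tilde O^+(\Lambda):\det g=1\}$. *)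

theory Defs
  imports "HOL-Analysis.Analysis" "HOL-Algebra.Coset"
begin

definition bform :: "'a::comm_ring_1^'n^'n \<Rightarrow> 'a^'n \<Rightarrow> 'a^'n \<Rightarrow> 'a" where
  "bform B x y = (\<Sum>i\<in>UNIV. \<Sum>k\<in>UNIV. x$i * B$i$k * y$k)"

definition ivec :: "int^'n \<Rightarrow> 'a::ring_1^'n" where
  "ivec v = (\<chi> i. of_int (v$i))"

definition imat :: "int^'n^'m \<Rightarrow> 'a::ring_1^'n^'m" where
  "imat A = (\<chi> i k. of_int (A$i$k))"

definition symmetric_gram :: "'a^'n^'n \<Rightarrow> bool" where
  "symmetric_gram B \<longleftrightarrow> transpose B = B"

definition pos_index :: "int^'n^'n \<Rightarrow> nat" where
  "pos_index B = (GREATEST d. \<exists>V::(real^'n) set. subspace V \<and> dim V = d \<and>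
       (\<forall>v\<in>V. v \<noteq> 0 \<longrightarrow> bform (imat B) v v > 0))"

definition nondegenerate :: "int^'n^'n \<Rightarrow> bool" where
  "nondegenerate B \<longleftrightarrow> det B \<noteq> 0"

text \<open>Lattice of signature (p, q) for some q.\<close>
definition has_pos_signature :: "int^'n^'n \<Rightarrow> nat \<Rightarrow> bool" where
  "has_pos_signature B p \<longleftrightarrow> symmetric_gram B \<and> nondegenerate B \<and> pos_index B = p"

definition even_lattice :: "int^'n^'n \<Rightarrow> bool" where
  "even_lattice B \<longleftrightarrow> (\<forall>x. even (bform B x x))"

definition O_L :: "int^'n^'n \<Rightarrow> (int^'n^'n) set" where
  "O_L B = {g. (\<exists>h. g ** h = mat 1 \<and> h ** g = mat 1) \<and> transpose g ** B ** g = B}"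

text \<open>g acts trivially on the discriminant group L^*/L.\<close>
definition trivial_on_discr :: "int^'n^'n \<Rightarrow> int^'n^'n \<Rightarrow> bool" where
  "trivial_on_discr B g \<longleftrightarrow>
     (\<forall>y::rat^'n. (\<forall>x::int^'n. bform (imat B) y (ivec x) \<in> \<int>) \<longrightarrow>
        (\<exists>z::int^'n. imat g *v y - y = ivec z))"

definition reflection :: "real^'n^'n \<Rightarrow> real^'n \<Rightarrow> real^'n \<Rightarrow> real^'n" where
  "reflection B v x = x - (2 * bform B x v / bform B v v) *\<^sub>R v"

text \<open>Real spinor norm 1: g = rho_{v_1} ... rho_{v_m} with prod (-v_i^2/2) a positive
  real (i.e. equal to 1 modulo squares).\<close>
definition real_spinor_norm_one :: "int^'n^'n \<Rightarrow> int^'n^'n \<Rightarrow> bool" where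
  "real_spinor_norm_one B g \<longleftrightarrow>
     (\<exists>vs::(real^'n) list. (\<forall>v\<in>set vs. bform (imat B) v v \<noteq> 0) \<and>
        (\<lambda>x. (imat g :: real^'n^'n) *v x) = foldr (\<lambda>v f. reflection (imat B) v \<circ> f) vs id \<and>
        prod_list (map (\<lambda>v. - bform (imat B) v v / 2) vs) > 0)"

definition tO_plus :: "int^'n^'n \<Rightarrow> (int^'n^'n) set" where
  "tO_plus B = {g \<in> O_L B. trivial_on_discr B g \<and> real_spinor_norm_one B g}"

definition tSO_plus :: "int^'n^'n \<Rightarrow> (int^'n^'n) set" where
  "tSO_plus B = {g \<in> tO_plus B. det g = 1}"

text \<open>j : M \<rightarrow> L given by the matrix J (x \<mapsto> J *v x); isometric, injective, with
  L / j(M) torsion free.\<close>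
definition primitive_embedding :: "int^'n^'n \<Rightarrow> int^'m^'m \<Rightarrow> int^'m^'n \<Rightarrow> bool" where
  "primitive_embedding B BM J \<longleftrightarrow>
     inj (\<lambda>x. J *v x) \<and> transpose J ** B ** J = BM \<and>
     (\<forall>x::int^'n. \<forall>k::int. k \<noteq> 0 \<longrightarrow> k *s x \<in> range (\<lambda>m. J *v m) \<longrightarrow> x \<in> range (\<lambda>m. J *v m))"

definition orth_compl :: "int^'n^'n \<Rightarrow> int^'m^'n \<Rightarrow> (int^'n) set" where
  "orth_compl B J = {x. \<forall>m. bform B x (J *v m) = 0}"

definition O_sub :: "int^'n^'n \<Rightarrow> (int^'n) set \<Rightarrow> (int^'n \<Rightarrow> int^'n) monoid" where
  "O_sub B N = \<lparr> carrier = {f. f \<in> extensional N \<and> bij_betw f N N \<and>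
        (\<forall>x\<in>N. \<forall>y\<in>N. f (x + y) = f x + f y) \<and>
        (\<forall>x\<in>N. \<forall>y\<in>N. bform B (f x) (f y) = bform B x y)},
      mult = (\<lambda>f g. compose N f g), one = restrict id N \<rparr>"

definition Mo_fix :: "(int^'n^'n) set \<Rightarrow> int^'m^'n \<Rightarrow> (int^'n^'n) set" where
  "Mo_fix Mo J = {g \<in> Mo. \<forall>m. g *v (J *v m) = J *v m}"

definition Gamma :: "int^'n^'n \<Rightarrow> int^'m^'n \<Rightarrow> (int^'n^'n) set \<Rightarrow> (int^'n \<Rightarrow> int^'n) set" where
  "Gamma B J Mo = (\<lambda>g. restrict (\<lambda>x. g *v x) (orth_compl B J)) ` Mo_fix Mo J"

text \<open>Arithmetic subgroup of O(N), for a subgroup contained in O(N): finite index.\<close>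
definition arithmetic_subgroup :: "(int^'n \<Rightarrow> int^'n) set \<Rightarrow> (int^'n \<Rightarrow> int^'n) monoid \<Rightarrow> bool" where
  "arithmetic_subgroup H G \<longleftrightarrow> subgroup H G \<and> finite (rcosets\<^bsub>G\<^esub> H)"

end

theory Submission
  imports Defs
begin

text \<open>Clearing denominators, \<open>d\<close> times the orthogonal projections of \<open>L\<^sub>\<rat>\<close> onto \<open>N\<^sub>\<rat>\<close> and
  \<open>j(M)\<^sub>\<rat>\<close> are integral. Hence an isometry \<open>f\<close> of \<open>N\<close> with \<open>f \<equiv> id\<close> modulo \<open>d e\<close> extends
  to an integral isometry \<open>f \<oplus> id\<close> of \<open>L\<close> which is \<open>\<equiv> 1\<close> modulo \<open>e\<close>, and so acts trivially on
  \<open>L\<^sup>*/L\<close> because \<open>e L\<^sup>* \<subseteq> L\<close>. Two such extensions with the same determinant and the same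
  sign of the real spinor norm (of some Cartan--Dieudonn\'e factorization) differ by an element
  of \<open>tSO_plus B \<subseteq> Mo\<close> fixing \<open>j(M)\<close>, i.e. by an element of \<open>\<Gamma>\<close>. As the matrix of \<open>f\<close>
  modulo \<open>d\<^sup>2 e\<close> determines \<open>f\<close> modulo \<open>d e\<close> on \<open>N\<close>, finitely many data classify \<open>O(N)\<close>
  modulo \<open>\<Gamma>\<close>.\<close>

lemma bform_mult_vec: "bform B x y = (\<Sum>i\<in>UNIV. x$i * (B *v y)$i)"
  by (simp add: bform_def matrix_vector_mult_def sum_distrib_left mult.assoc)

lemma bform_add_left: "bform B (x + x') y = bform B x y + bform B x' y"
  by (simp add: bform_def algebra_simps sum.distrib)

lemma bform_add_right: "bform B x (y + y') = bform B x y + bform B x y'"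
  by (simp add: bform_def algebra_simps sum.distrib)

lemma bform_diff_left: "bform B (x - x') y = bform B x y - bform B x' y"
  by (simp add: bform_def algebra_simps sum_subtractf)

lemma bform_diff_right: "bform B x (y - y') = bform B x y - bform B x y'"
  by (simp add: bform_def algebra_simps sum_subtractf)

lemma bform_minus_left: "bform B (- x) y = - bform B x y"
  by (simp add: bform_def sum_negf)

lemma bform_zero_left [simp]: "bform B 0 y = 0"
  by (simp add: bform_def)

lemma bform_smult_left: "bform B (c *s x) y = c * bform B x y"
  by (simp add: bform_def sum_distrib_left algebra_simps)

lemma bform_smult_right: "bform B x (c *s y) = c * bform B x y"
  by (simp add: bform_def sum_distrib_left algebra_simps)

lemma bform_scaleR_left: "bform (B::real^'n^'n) (c *\<^sub>R x) y = c * bform B x y"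
  by (simp add: bform_def sum_distrib_left algebra_simps)

lemma bform_scaleR_right: "bform (B::real^'n^'n) x (c *\<^sub>R y) = c * bform B x y"
  by (simp add: bform_def sum_distrib_left algebra_simps)

lemma bform_sum_left: "finite S \<Longrightarrow> bform B (sum f S) y = (\<Sum>s\<in>S. bform B (f s) y)"
  by (induction S rule: finite_induct) (simp_all add: bform_add_left)

lemma linear_bform_right: "linear (\<lambda>y. bform (B::real^'n^'n) x y)"
  by (rule linearI) (simp_all add: bform_add_right bform_scaleR_right)

lemma bform_commute:
  assumes "transpose B = B" shows "bform B x y = bform B y x"
proof -
  have "B$k$i = B$i$k" for i k by (metis assms transpose_def vec_lambda_beta)
  then show ?thesis unfolding bform_def
    by (subst sum.swap) (simp add: mult_ac)
qed

lemma sum_transpose_mult_vec: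
  "(\<Sum>i\<in>UNIV. ((G::'a::comm_semiring_1^'n^'m) *v x)$i * w$i) = (\<Sum>k\<in>UNIV. x$k * (transpose G *v w)$k)"
  unfolding matrix_vector_mult_def transpose_def
  by (simp add: sum_distrib_left sum_distrib_right mult_ac) (rule sum.swap)

lemma bform_mult_vec_both: "bform B (G *v x) (G *v y) = bform (transpose G ** B ** G) x y"
  unfolding bform_mult_vec sum_transpose_mult_vec
  by (simp add: matrix_vector_mul_assoc matrix_mul_assoc)

lemma matrix_vector_mult_axis: "((A::'a::semiring_1^'n^'m) *v axis k 1)$i = A$i$k"
  by (simp add: matrix_vector_mult_def axis_def if_distrib[where f="\<lambda>a. _ * a"] cong: if_cong)

lemma bform_axis_right: "bform B u (axis k 1) = (\<Sum>i\<in>UNIV. u$i * B$i$k)"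
  unfolding bform_def axis_def
  by (simp add: if_distrib[where f="\<lambda>a. _ * a"] cong: if_cong)

lemma bform_axis: "bform B (axis i 1) (axis k 1) = B$i$k"
proof -
  have "bform B (axis i 1) (axis k 1) = (\<Sum>i'\<in>UNIV. if i' = i then B$i'$k else 0)"
    unfolding bform_axis_right by (rule sum.cong) (auto simp: axis_def)
  then show ?thesis by simp
qed

lemma matrix_eq_by_bform: "(\<And>x y. bform A x y = bform B x y) \<Longrightarrow> A = B"
  by (simp add: vec_eq_iff flip: bform_axis)

lemma bform_nondegenerate:
  fixes B :: "'a::field^'n^'n"
  assumes "det B \<noteq> 0" "\<And>v. bform B u v = 0"
  shows "u = 0"
proof -
  have "transpose B *v u = 0"
    using assms(2)[of "axis _ 1"] unfolding bform_axis_right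
    by (simp add: vec_eq_iff matrix_vector_mult_def transpose_def mult.commute)
  moreover obtain C where "C ** transpose B = mat 1"
    using assms(1) invertible_det_nz[of "transpose B"] by (auto simp: invertible_def)
  ultimately show ?thesis
    by (metis matrix_vector_mul_assoc matrix_vector_mul_lid matrix_vector_mult_0_right)
qed

section \<open>Reflections and the Cartan--Dieudonn\'e theorem\<close>

definition reflection_prod :: "real^'n^'n \<Rightarrow> (real^'n) list \<Rightarrow> real^'n \<Rightarrow> real^'n" where
  "reflection_prod B vs = foldr (\<lambda>v f. reflection B v \<circ> f) vs id"

lemma reflection_prod_Nil [simp]: "reflection_prod B [] = id"
  by (simp add: reflection_prod_def)

lemma reflection_prod_Cons [simp]: "reflection_prod B (v # vs) = reflection B v \<circ> reflection_prod B vs"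
  by (simp add: reflection_prod_def)

lemma reflection_prod_append: "reflection_prod B (xs @ ys) = reflection_prod B xs \<circ> reflection_prod B ys"
  by (induction xs) simp_all

definition anisotropic :: "real^'n^'n \<Rightarrow> (real^'n) list \<Rightarrow> bool" where
  "anisotropic B vs \<longleftrightarrow> (\<forall>v\<in>set vs. bform B v v \<noteq> 0)"

definition anisotropic_orthogonal :: "real^'n^'n \<Rightarrow> (real^'n) set \<Rightarrow> bool" where
  "anisotropic_orthogonal B S \<longleftrightarrow>
     (\<forall>e\<in>S. bform B e e \<noteq> 0) \<and> (\<forall>e\<in>S. \<forall>e'\<in>S. e \<noteq> e' \<longrightarrow> bform B e e' = 0)"

lemma linear_reflection: "linear (reflection B v)"
  unfolding reflection_def
  by (rule linearI) (simp_all add: bform_add_left bform_scaleR_left add_divide_distrib algebra_simps)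

lemma reflection_involutive: "bform B v v \<noteq> 0 \<Longrightarrow> reflection B v (reflection B v x) = x"
  unfolding reflection_def
  by (simp add: bform_diff_left bform_scaleR_left field_simps)

lemma reflection_orthogonal: "bform B x v = 0 \<Longrightarrow> reflection B v x = x"
  unfolding reflection_def by simp

lemma reflection_minus_self: "bform B x x \<noteq> 0 \<Longrightarrow> reflection B x (- x) = x"
  unfolding reflection_def by (simp add: bform_minus_left vec_eq_iff)

lemma linear_reflection_prod: "linear (reflection_prod B vs)"
proof (induction vs)
  case Nil
  show ?case unfolding reflection_prod_Nil by (rule linear_id)
next
  case (Cons v vs)
  show ?case unfolding reflection_prod_Cons by (rule linear_compose[OF Cons.IH linear_reflection])
qed

lemma reflection_prod_rev_inverse:
  "anisotropic B vs \<Longrightarrow> reflection_prod B (rev vs) \<circ> reflection_prod B vs = id"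
proof (induction vs)
  case (Cons v vs)
  then have "reflection_prod B (rev (v # vs)) \<circ> reflection_prod B (v # vs)
      = reflection_prod B (rev vs) \<circ> (reflection B v \<circ> reflection B v) \<circ> reflection_prod B vs"
    by (simp add: reflection_prod_append o_assoc)
  also have "reflection B v \<circ> reflection B v = id"
    using Cons.prems reflection_involutive by (auto simp: anisotropic_def fun_eq_iff)
  finally show ?case using Cons by (simp add: anisotropic_def)
qed simp

context
  fixes B :: "real^'n^'n"
  assumes symB: "transpose B = B"
begin

lemma reflection_isometry:
  "bform B v v \<noteq> 0 \<Longrightarrow> bform B (reflection B v x) (reflection B v y) = bform B x y"
  unfolding reflection_def
  using bform_commute[OF symB, of v y]
  by (simp add: bform_diff_left bform_diff_right bform_scaleR_left bform_scaleR_right field_simps)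

lemma reflection_diff:
  assumes "bform B x x = bform B y y" "bform B (x - y) (x - y) \<noteq> 0"
  shows "reflection B (x - y) y = x"
proof -
  have "bform B (x - y) (x - y) = - 2 * bform B y (x - y)"
    using assms(1) bform_commute[OF symB, of x y] by (simp add: bform_diff_left bform_diff_right)
  then have "2 * bform B y (x - y) / bform B (x - y) (x - y) = -1"
    using assms(2) by (simp add: field_simps)
  then show ?thesis unfolding reflection_def by (simp add: vec_eq_iff)
qed

lemma reflection_add:
  assumes "bform B x x = bform B y y" "bform B (x + y) (x + y) \<noteq> 0"
  shows "reflection B (x + y) y = - x"
proof -
  have "bform B (x + y) (x + y) = 2 * bform B y (x + y)"
    using assms(1) bform_commute[OF symB, of x y] by (simp add: bform_add_left bform_add_right)
  then have "2 * bform B y (x + y) / bform B (x + y) (x + y) = 1"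
    using assms(2) by (simp add: field_simps)
  then show ?thesis unfolding reflection_def by (simp add: vec_eq_iff)
qed

lemma reflection_prod_isometry:
  "anisotropic B vs \<Longrightarrow> bform B (reflection_prod B vs x) (reflection_prod B vs y) = bform B x y"
  by (induction vs) (simp_all add: anisotropic_def reflection_isometry)

text \<open>Since \<open>q(x - y) + q(x + y) = 4 q(x)\<close>, one of \<open>x - y\<close>, \<open>x + y\<close> is anisotropic; one or two
  reflections then carry \<open>y\<close> back to \<open>x\<close> while fixing everything orthogonal to both.\<close>
lemma reflections_carry_back:
  assumes xx: "bform B x x \<noteq> 0" and yy: "bform B x x = bform B y y"
  obtains ws where "anisotropic B ws" "reflection_prod B ws y = x"
    "\<And>u. bform B u x = 0 \<Longrightarrow> bform B u y = 0 \<Longrightarrow> reflection_prod B ws u = u"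
proof (cases "bform B (x - y) (x - y) = 0")
  case False
  show ?thesis
  proof (rule that[of "[x - y]"])
    show "anisotropic B [x - y]" using False by (simp add: anisotropic_def)
    show "reflection_prod B [x - y] y = x" using reflection_diff[OF yy False] by simp
    show "reflection_prod B [x - y] u = u" if "bform B u x = 0" "bform B u y = 0" for u
      using that by (simp add: reflection_orthogonal bform_diff_right)
  qed
next
  case True
  have "bform B (x - y) (x - y) + bform B (x + y) (x + y) = 4 * bform B x x"
    using yy bform_commute[OF symB, of x y]
    by (simp add: bform_add_left bform_add_right bform_diff_left bform_diff_right)
  with True xx have xy: "bform B (x + y) (x + y) \<noteq> 0" by simp
  show ?thesis
  proof (rule that[of "[x, x + y]"])
    show "anisotropic B [x, x + y]" using xx xy by (simp add: anisotropic_def)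
    show "reflection_prod B [x, x + y] y = x"
      using reflection_add[OF yy xy] reflection_minus_self[OF xx] by simp
    show "reflection_prod B [x, x + y] u = u" if "bform B u x = 0" "bform B u y = 0" for u
      using that by (simp add: reflection_orthogonal bform_add_right)
  qed
qed

context
  assumes detB: "det B \<noteq> 0"
begin

lemma exists_anisotropic_orthogonal:
  assumes fin: "finite S" and S: "anisotropic_orthogonal B S" and ns: "span S \<noteq> UNIV"
  shows "\<exists>x. bform B x x \<noteq> 0 \<and> (\<forall>e\<in>S. bform B x e = 0)"
proof (rule ccontr)
  assume "\<not> ?thesis"
  then have isotropic: "bform B u u = 0" if "\<forall>e\<in>S. bform B u e = 0" for u
    using that by blast
  define proj where "proj w = (\<Sum>e\<in>S. (bform B w e / bform B e e) *\<^sub>R e)" for w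
  define P where "P w = w - proj w" for w
  have proj_span: "proj w \<in> span S" for w
    unfolding proj_def by (intro span_sum span_mul span_base)
  have P_orth: "bform B (P w) e = 0" if e: "e \<in> S" for w e
  proof -
    have "bform B (proj w) e = (\<Sum>e'\<in>S. (bform B w e' / bform B e' e') * bform B e' e)"
      using fin by (simp add: proj_def bform_sum_left bform_scaleR_left)
    also have "\<dots> = (bform B w e / bform B e e) * bform B e e"
      using S e unfolding anisotropic_orthogonal_def
      by (subst sum.remove[OF fin e]) (auto intro!: sum.neutral)
    finally show ?thesis
      using S e by (simp add: P_def bform_diff_left anisotropic_orthogonal_def)
  qed
  obtain w where w: "w \<notin> span S" using ns by auto
  have "P w \<noteq> 0"
    using w proj_span[of w] by (auto simp: P_def)
  moreover have "bform B (P w) v = 0" for v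
  proof -
    have "bform B (P w) (P w) = 0" "bform B (P v) (P v) = 0"
      by (auto intro: isotropic P_orth)
    moreover have "bform B (P w + P v) (P w + P v) = 0"
      by (rule isotropic) (simp add: bform_add_left P_orth)
    ultimately have "bform B (P w) (P v) = 0"
      using bform_commute[OF symB, of "P w" "P v"] by (simp add: bform_add_left bform_add_right)
    moreover have "bform B (P w) (proj v) = 0"
      using real_vector.linear_eq_0_on_span[OF linear_bform_right _ proj_span] P_orth by blast
    ultimately show ?thesis
      by (metis P_def add_0 bform_add_right diff_add_cancel)
  qed
  ultimately show False
    using bform_nondegenerate[OF detB] by blast
qed

lemma cartan_dieudonne_fixing:
  assumes "finite S" "anisotropic_orthogonal B S" "linear \<sigma>"
    "\<And>x y. bform B (\<sigma> x) (\<sigma> y) = bform B x y" "\<And>e. e \<in> S \<Longrightarrow> \<sigma> e = e"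
  shows "\<exists>vs. anisotropic B vs \<and> \<sigma> = reflection_prod B vs"
  using assms
proof (induction "CARD('n) - dim S" arbitrary: S \<sigma> rule: less_induct)
  case less
  show ?case
  proof (cases "span S = UNIV")
    case True
    have "\<sigma> x = x" for x
      using real_vector.linear_eq_on_span[of \<sigma> id S x] less.prems(3,5) True linear_id by auto
    then have "\<sigma> = reflection_prod B []" by auto
    then show ?thesis by (metis anisotropic_def empty_iff empty_set)
  next
    case False
    then obtain x where x: "bform B x x \<noteq> 0" "\<forall>e\<in>S. bform B x e = 0"
      using exists_anisotropic_orthogonal[OF less.prems(1,2)] by blast
    have orth_x: "bform B e x = 0" if "e \<in> S" for e
      using x(2) that bform_commute[OF symB] by metis
    have "x \<notin> span S"
      using real_vector.linear_eq_0_on_span[OF linear_bform_right[of B x], of S x] x by blast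
    then have smaller: "CARD('n) - dim (insert x S) < CARD('n) - dim S"
      using dim_insert[of x S] dim_subset_UNIV_cart[of "insert x S"] by simp
    have S': "anisotropic_orthogonal B (insert x S)"
      using less.prems(2) x orth_x unfolding anisotropic_orthogonal_def by auto
    have "bform B x x = bform B (\<sigma> x) (\<sigma> x)" using less.prems(4) by simp
    then obtain ws where ws: "anisotropic B ws" "reflection_prod B ws (\<sigma> x) = x"
      "\<And>u. bform B u x = 0 \<Longrightarrow> bform B u (\<sigma> x) = 0 \<Longrightarrow> reflection_prod B ws u = u"
      by (rule reflections_carry_back[OF x(1)]) blast
    define \<tau> where "\<tau> = reflection_prod B ws \<circ> \<sigma>"
    have "\<tau> e = e" if "e \<in> insert x S" for e
    proof (cases "e = x")
      case False
      with that have e: "e \<in> S" by simp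
      then have "bform B e (\<sigma> x) = bform B e x"
        using less.prems(4)[of e x] less.prems(5) by simp
      then show ?thesis using ws(3) orth_x e less.prems(5) by (simp add: \<tau>_def)
    qed (simp add: \<tau>_def ws(2))
    moreover have "linear \<tau>" "\<And>a b. bform B (\<tau> a) (\<tau> b) = bform B a b"
      using less.prems(3,4) reflection_prod_isometry[OF ws(1)]
      by (simp_all add: \<tau>_def linear_compose linear_reflection_prod)
    ultimately obtain vs where vs: "anisotropic B vs" "\<tau> = reflection_prod B vs"
      using less.hyps[OF smaller _ S'] less.prems(1) by blast
    have "\<sigma> = reflection_prod B (rev ws) \<circ> \<tau>"
      using reflection_prod_rev_inverse[OF ws(1)] by (simp add: \<tau>_def o_assoc)
    then show ?thesis
      using vs ws(1) by (intro exI[of _ "rev ws @ vs"]) (auto simp: anisotropic_def reflection_prod_append)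
  qed
qed

theorem cartan_dieudonne:
  assumes "transpose G ** B ** G = B"
  shows "\<exists>vs. anisotropic B vs \<and> (\<lambda>x. G *v x) = reflection_prod B vs"
  by (rule cartan_dieudonne_fixing[of "{}"])
    (simp_all add: anisotropic_orthogonal_def bform_mult_vec_both assms)

end

end

lemma imat_mult: "(imat (A ** B) :: 'a::ring_1^_^_) = imat A ** imat B"
  by (simp add: imat_def matrix_matrix_mult_def vec_eq_iff)

lemma imat_mult_vec: "(ivec (A *v x) :: 'a::ring_1^_) = imat A *v ivec x"
  by (simp add: imat_def ivec_def matrix_vector_mult_def vec_eq_iff)

lemma imat_transpose: "(imat (transpose A) :: 'a::ring_1^_^_) = transpose (imat A)"
  by (simp add: imat_def transpose_def vec_eq_iff)

lemma imat_mat: "(imat (mat c) :: 'a::ring_1^'n^'n) = mat (of_int c)"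
  by (simp add: imat_def mat_def vec_eq_iff)

lemma imat_inject: "(imat A :: 'a::ring_char_0^'n^'m) = imat B \<Longrightarrow> A = B"
  by (simp add: imat_def vec_eq_iff)

lemma det_imat: "det (imat A :: 'a::comm_ring_1^'n^'n) = of_int (det A)"
  by (simp add: det_def imat_def of_int_sum of_int_prod)

lemma mat_mult_vec: "mat c *v x = c *s (x::'a::comm_semiring_1^'n)"
  by (simp add: vec_eq_iff matrix_vector_mult_def mat_def if_distrib[where f="\<lambda>a. a * _"] cong: if_cong)

lemma matrix_vector_mult_smult: "A *v (c *s x) = c *s (A *v (x::'a::comm_semiring_1^'n))"
  by (simp add: vec_eq_iff matrix_vector_mult_def sum_distrib_left mult_ac)

lemma mat_matrix_mult: "(mat c ** A) $ i $ j = c * A $ i $ j"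
  by (simp add: matrix_matrix_mult_def mat_def if_distrib[where f="\<lambda>a. a * _"] cong: if_cong)

lemma mat_mult_commute: "mat c ** A = A ** (mat c :: 'a::comm_semiring_1^'n^'n)"
  by (simp add: vec_eq_iff mat_matrix_mult matrix_matrix_mult_def mat_def mult.commute
      if_distrib[where f="\<lambda>a. _ * a"] cong: if_cong)

lemma smult_cancel_int: "(d::int) \<noteq> 0 \<Longrightarrow> d *s u = d *s v \<Longrightarrow> u = v"
  by (simp add: vec_eq_iff)

text \<open>Clearing the denominators of the rational inverse.\<close>
lemma exists_int_scaled_inverse:
  fixes A :: "int^'m^'m"
  assumes "det A \<noteq> 0"
  obtains d D where "d > 0" "A ** D = mat d" "D ** A = mat d"
proof -
  define Aq where "Aq = (imat A :: rat^'m^'m)"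
  have "det Aq \<noteq> 0" using assms by (simp add: Aq_def det_imat)
  then obtain C where C: "Aq ** C = mat 1" "C ** Aq = mat 1"
    by (auto simp: invertible_det_nz[symmetric] invertible_def)
  define d where "d = (\<Prod>p\<in>(UNIV::('m \<times> 'm) set). snd (quotient_of (C $ fst p $ snd p)))"
  have "d > 0" unfolding d_def by (intro prod_pos) (simp add: quotient_of_denom_pos')
  have int: "of_int d * C$i$j \<in> \<int>" for i j
  proof -
    obtain n q where nq: "quotient_of (C$i$j) = (n, q)" by fastforce
    have "q dvd d"
      unfolding d_def using dvd_prodI[of UNIV "(i, j)" "\<lambda>p. snd (quotient_of (C $ fst p $ snd p))"] nq
      by simp
    then obtain r where "d = q * r" by blast
    moreover have "q > 0" using nq quotient_of_denom_pos by blast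
    ultimately have "of_int d * C$i$j = of_int (r * n)"
      using quotient_of_div[OF nq] by simp
    then show ?thesis by simp
  qed
  define D :: "int^'m^'m" where "D = (\<chi> i j. \<lfloor>of_int d * C$i$j\<rfloor>)"
  have iD: "(imat D :: rat^'m^'m) = mat (of_int d) ** C"
    using int by (simp add: imat_def D_def vec_eq_iff mat_matrix_mult)
  have "(imat (A ** D) :: rat^'m^'m) = imat (mat d)"
    by (simp add: imat_mult iD imat_mat matrix_mul_assoc mat_mult_commute flip: Aq_def)
      (simp add: C flip: matrix_mul_assoc)
  moreover have "(imat (D ** A) :: rat^'m^'m) = imat (mat d)"
    by (simp add: imat_mult iD imat_mat C flip: Aq_def matrix_mul_assoc)
  ultimately show ?thesis using that \<open>d > 0\<close> imat_inject by blast
qed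

lemma finite_matrices_with_entries_in:
  assumes "finite S" shows "finite {M::'a^'n^'m. \<forall>i j. M$i$j \<in> S}"
proof -
  have "{M::'a^'n^'m. \<forall>i j. M$i$j \<in> S} \<subseteq> (\<lambda>F. \<chi> i j. F i j) ` (UNIV \<rightarrow>\<^sub>E UNIV \<rightarrow>\<^sub>E S)"
  proof
    fix M :: "'a^'n^'m" assume "M \<in> {M. \<forall>i j. M$i$j \<in> S}"
    then have "(\<lambda>i j. M$i$j) \<in> UNIV \<rightarrow>\<^sub>E UNIV \<rightarrow>\<^sub>E S" by auto
    then show "M \<in> (\<lambda>F. \<chi> i j. F i j) ` (UNIV \<rightarrow>\<^sub>E UNIV \<rightarrow>\<^sub>E S)"
      by (rule rev_image_eqI) (simp add: vec_eq_iff)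
  qed
  moreover have "finite ((UNIV::'m set) \<rightarrow>\<^sub>E (UNIV::'n set) \<rightarrow>\<^sub>E S)"
    using assms by (intro finite_PiE) auto
  ultimately show ?thesis by (rule finite_subset[OF _ finite_imageI])
qed

section \<open>Finite index via classifying maps\<close>

context group
begin

lemma finite_rcosets_if_classified:
  assumes H: "subgroup H G" and fin: "finite (\<phi> ` carrier G)"
    and classifies: "\<And>a b. a \<in> carrier G \<Longrightarrow> b \<in> carrier G \<Longrightarrow> \<phi> a = \<phi> b \<Longrightarrow> a \<otimes> inv b \<in> H"
  shows "finite (rcosets H)"
proof -
  define rep where "rep s = (SOME a. a \<in> carrier G \<and> \<phi> a = s)" for s
  have "rcosets H \<subseteq> (\<lambda>s. H #> rep s) ` (\<phi> ` carrier G)"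
  proof
    fix C assume "C \<in> rcosets H"
    then obtain a where a: "a \<in> carrier G" "C = H #> a" unfolding RCOSETS_def by auto
    have r: "rep (\<phi> a) \<in> carrier G" "\<phi> (rep (\<phi> a)) = \<phi> a"
      using someI[of "\<lambda>b. b \<in> carrier G \<and> \<phi> b = \<phi> a" a] a(1) by (auto simp: rep_def)
    have "rep (\<phi> a) \<in> H #> a"
      using subgroup.rcos_module_rev[OF H is_group a(1) r(1)] classifies[OF r(1) a(1) r(2)] by simp
    then have "C = H #> rep (\<phi> a)"
      using repr_independence[OF _ a(1) H] a(2) by simp
    then show "C \<in> (\<lambda>s. H #> rep s) ` (\<phi> ` carrier G)" using a(1) by blast
  qed
  then show ?thesis using finite_imageI[OF fin] by (rule finite_subset)
qed

text \<open>Composing \<open>\<kappa>\<close> with translation by a chosen representative of each \<open>\<psi>\<close>-class classifies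
  \<open>G\<close> modulo \<open>H\<close>.\<close>
lemma finite_rcosets_if_classified_in_two_steps:
  assumes H: "subgroup H G" and K: "K \<subseteq> carrier G"
    and fin_\<psi>: "finite (\<psi> ` carrier G)" and fin_\<kappa>: "finite (\<kappa> ` K)"
    and \<psi>: "\<And>a b. a \<in> carrier G \<Longrightarrow> b \<in> carrier G \<Longrightarrow> \<psi> a = \<psi> b \<Longrightarrow> a \<otimes> inv b \<in> K"
    and \<kappa>: "\<And>k l. k \<in> K \<Longrightarrow> l \<in> K \<Longrightarrow> \<kappa> k = \<kappa> l \<Longrightarrow> k \<otimes> inv l \<in> H"
  shows "finite (rcosets H)"
proof -
  define rep where "rep a = (SOME r. r \<in> carrier G \<and> \<psi> r = \<psi> a)" for a
  have rep: "rep a \<in> carrier G" "\<psi> (rep a) = \<psi> a" if "a \<in> carrier G" for a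
    using someI[of "\<lambda>r. r \<in> carrier G \<and> \<psi> r = \<psi> a" a] that by (auto simp: rep_def)
  have in_K: "a \<otimes> inv rep a \<in> K" if "a \<in> carrier G" for a
    using \<psi>[OF that rep(1)[OF that]] rep(2)[OF that] by simp
  define \<phi> where "\<phi> a = (\<psi> a, \<kappa> (a \<otimes> inv rep a))" for a
  show ?thesis
  proof (rule finite_rcosets_if_classified[OF H])
    show "finite (\<phi> ` carrier G)"
      by (rule finite_subset[of _ "\<psi> ` carrier G \<times> \<kappa> ` K"]) (use in_K fin_\<psi> fin_\<kappa> in \<open>auto simp: \<phi>_def\<close>)
    fix a b assume a: "a \<in> carrier G" and b: "b \<in> carrier G" and "\<phi> a = \<phi> b"
    then have "\<psi> a = \<psi> b" and "\<kappa> (a \<otimes> inv rep a) = \<kappa> (b \<otimes> inv rep b)"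
      by (simp_all add: \<phi>_def)
    moreover from this(1) have "rep a = rep b" by (simp add: rep_def)
    ultimately have "(a \<otimes> inv rep a) \<otimes> inv (b \<otimes> inv rep a) \<in> H"
      using \<kappa> in_K a b by metis
    also have "(a \<otimes> inv rep a) \<otimes> inv (b \<otimes> inv rep a) = a \<otimes> inv b"
      using a b rep(1)[OF a] by (simp add: inv_mult_group m_assoc flip: m_assoc[of "inv rep a"])
    finally show "a \<otimes> inv b \<in> H" .
  qed
qed

end

definition cong_id :: "int \<Rightarrow> (int^'n) set \<Rightarrow> (int^'n \<Rightarrow> int^'n) \<Rightarrow> bool" where
  "cong_id k N f \<longleftrightarrow> (\<forall>w\<in>N. \<exists>z. f w - w = k *s z)"

locale int_submodule =
  fixes N :: "(int^'n) set"
  assumes zero_mem: "0 \<in> N"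
    and add_mem: "x \<in> N \<Longrightarrow> y \<in> N \<Longrightarrow> x + y \<in> N"
    and smult_mem: "x \<in> N \<Longrightarrow> c *s x \<in> N"
begin

lemma sum_mem: "(\<And>s. s \<in> S \<Longrightarrow> g s \<in> N) \<Longrightarrow> sum g S \<in> N"
  by (induction S rule: infinite_finite_induct) (auto simp: zero_mem add_mem)

lemma O_sub_simps [simp]:
  "mult (O_sub B N) = compose N" "one (O_sub B N) = restrict id N"
  by (simp_all add: O_sub_def)

lemma carrier_O_sub_iff: "f \<in> carrier (O_sub B N) \<longleftrightarrow> f \<in> extensional N \<and> bij_betw f N N \<and>
    (\<forall>x\<in>N. \<forall>y\<in>N. f (x + y) = f x + f y) \<and> (\<forall>x\<in>N. \<forall>y\<in>N. bform B (f x) (f y) = bform B x y)"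
  by (simp add: O_sub_def)

context
  fixes B f assumes f: "f \<in> carrier (O_sub B N)"
begin

lemma O_sub_extensional: "f \<in> extensional N"
  using f by (simp add: carrier_O_sub_iff)

lemma O_sub_bij: "bij_betw f N N"
  using f by (simp add: carrier_O_sub_iff)

lemma O_sub_mem: "x \<in> N \<Longrightarrow> f x \<in> N"
  using O_sub_bij by (rule bij_betw_apply)

lemma O_sub_add: "x \<in> N \<Longrightarrow> y \<in> N \<Longrightarrow> f (x + y) = f x + f y"
  using f by (simp add: carrier_O_sub_iff)

lemma O_sub_isometry: "x \<in> N \<Longrightarrow> y \<in> N \<Longrightarrow> bform B (f x) (f y) = bform B x y"
  using f by (simp add: carrier_O_sub_iff)

lemma O_sub_smult:
  assumes x: "x \<in> N" shows "f (c *s x) = c *s f x"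
proof (induction c rule: int_induct[where k=0])
  case base
  have "f 0 = f (0 + 0)" by simp
  then show ?case using O_sub_add[OF zero_mem zero_mem] by simp
next
  case (step1 i)
  have "f ((i + 1) *s x) = f (i *s x + x)" by (simp add: vector_sadd_rdistrib)
  then show ?case using O_sub_add[OF smult_mem[OF x] x] step1.IH by (simp add: vector_sadd_rdistrib)
next
  case (step2 i)
  have "(i - 1) *s x + x = i *s x" by (simp add: vec_eq_iff algebra_simps)
  then have "f ((i - 1) *s x) + f x = i *s f x"
    using O_sub_add[OF smult_mem[OF x] x, of "i - 1"] step2.IH by simp
  then show ?case by (simp add: vec_eq_iff algebra_simps)
qed

lemma O_sub_sum: "(\<And>s. s \<in> S \<Longrightarrow> g s \<in> N) \<Longrightarrow> f (sum g S) = (\<Sum>s\<in>S. f (g s))"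
proof (induction S rule: infinite_finite_induct)
  case (insert s S)
  then show ?case using O_sub_add[of "g s" "sum g S"] sum_mem[of S g] by simp
qed (use O_sub_smult[OF zero_mem, of 0] in simp_all)

end

lemma compose_mem_O_sub:
  assumes f: "f \<in> carrier (O_sub B N)" and g: "g \<in> carrier (O_sub B N)"
  shows "compose N f g \<in> carrier (O_sub B N)"
  unfolding carrier_O_sub_iff
proof (intro conjI ballI)
  show "compose N f g \<in> extensional N" by (simp add: compose_def)
  show "bij_betw (compose N f g) N N"
    using bij_betw_trans[OF O_sub_bij[OF g] O_sub_bij[OF f]]
    by (rule bij_betw_cong[THEN iffD1, rotated]) (simp add: compose_def)
  fix x y assume "x \<in> N" "y \<in> N"
  then show "compose N f g (x + y) = compose N f g x + compose N f g y"
      "bform B (compose N f g x) (compose N f g y) = bform B x y"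
    using O_sub_add[OF f] O_sub_add[OF g] O_sub_mem[OF g] O_sub_isometry[OF f] O_sub_isometry[OF g]
    by (simp_all add: compose_def add_mem)
qed

lemma id_mem_O_sub: "restrict id N \<in> carrier (O_sub B N)"
  by (auto simp: carrier_O_sub_iff bij_betw_def inj_on_def add_mem)

definition O_sub_inverse :: "(int^'n \<Rightarrow> int^'n) \<Rightarrow> int^'n \<Rightarrow> int^'n" where
  "O_sub_inverse f = restrict (inv_into N f) N"

context
  fixes B f assumes f: "f \<in> carrier (O_sub B N)"
begin

lemma O_sub_inverse_mem: "O_sub_inverse f \<in> carrier (O_sub B N)"
proof -
  have fi: "f (inv_into N f x) = x" "inv_into N f x \<in> N" if "x \<in> N" for x
    using O_sub_bij[OF f] that by (auto simp: bij_betw_def f_inv_into_f inv_into_into)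
  have if_: "inv_into N f (f x) = x" if "x \<in> N" for x
    using O_sub_bij[OF f] that by (simp add: bij_betw_def)
  show ?thesis unfolding carrier_O_sub_iff O_sub_inverse_def
  proof (intro conjI ballI)
    show "bij_betw (restrict (inv_into N f) N) N N"
      using bij_betw_inv_into[OF O_sub_bij[OF f]] by (rule bij_betw_cong[THEN iffD1, rotated]) simp
    fix x y assume xy: "x \<in> N" "y \<in> N"
    have "f (inv_into N f x + inv_into N f y) = x + y"
      using xy fi O_sub_add[OF f] by simp
    then have "inv_into N f (x + y) = inv_into N f x + inv_into N f y"
      using if_ fi xy add_mem by metis
    then show "restrict (inv_into N f) N (x + y) = restrict (inv_into N f) N x + restrict (inv_into N f) N y"
      using xy add_mem by simp
    show "bform B (restrict (inv_into N f) N x) (restrict (inv_into N f) N y) = bform B x y"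
      using xy fi O_sub_isometry[OF f, of "inv_into N f x" "inv_into N f y"] by simp
  qed simp
qed

lemma O_sub_inverse_left: "compose N (O_sub_inverse f) f = restrict id N"
  using O_sub_bij[OF f] O_sub_mem[OF f]
  by (auto simp: O_sub_inverse_def compose_def fun_eq_iff bij_betw_def)

lemma O_sub_inverse_right: "compose N f (O_sub_inverse f) = restrict id N"
  using O_sub_bij[OF f] by (auto simp: O_sub_inverse_def compose_def fun_eq_iff bij_betw_def f_inv_into_f)

end

lemma group_O_sub: "group (O_sub B N)"
proof (rule groupI)
  fix f g h assume f: "f \<in> carrier (O_sub B N)" and g: "g \<in> carrier (O_sub B N)"
    and h: "h \<in> carrier (O_sub B N)"
  show "f \<otimes>\<^bsub>O_sub B N\<^esub> g \<in> carrier (O_sub B N)" using compose_mem_O_sub[OF f g] by simp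
  show "f \<otimes>\<^bsub>O_sub B N\<^esub> g \<otimes>\<^bsub>O_sub B N\<^esub> h = f \<otimes>\<^bsub>O_sub B N\<^esub> (g \<otimes>\<^bsub>O_sub B N\<^esub> h)"
    using compose_assoc[of h N N f g] O_sub_mem[OF h] by (simp add: Pi_iff)
  show "\<one>\<^bsub>O_sub B N\<^esub> \<otimes>\<^bsub>O_sub B N\<^esub> f = f"
    using O_sub_mem[OF f] O_sub_extensional[OF f]
    by (auto simp: compose_def fun_eq_iff extensional_def)
  show "\<exists>g\<in>carrier (O_sub B N). g \<otimes>\<^bsub>O_sub B N\<^esub> f = \<one>\<^bsub>O_sub B N\<^esub>"
    using O_sub_inverse_mem[OF f] O_sub_inverse_left[OF f] by auto
qed (use id_mem_O_sub in simp)

lemma inv_O_sub: "f \<in> carrier (O_sub B N) \<Longrightarrow> inv\<^bsub>O_sub B N\<^esub> f = O_sub_inverse f"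
  using group.inv_equality[OF group_O_sub] O_sub_inverse_mem O_sub_inverse_left by simp

lemma cong_id_id: "cong_id k N (restrict id N)"
  unfolding cong_id_def by (intro ballI exI[of _ 0]) simp

lemma cong_id_compose:
  assumes "g \<in> carrier (O_sub B N)" "cong_id k N f" "cong_id k N g"
  shows "cong_id k N (compose N f g)"
  unfolding cong_id_def
proof
  fix w assume w: "w \<in> N"
  obtain z1 where "g w - w = k *s z1" using assms(3) w unfolding cong_id_def by blast
  moreover obtain z2 where "f (g w) - g w = k *s z2"
    using assms(2) O_sub_mem[OF assms(1) w] unfolding cong_id_def by blast
  ultimately have "compose N f g w - w = k *s (z2 + z1)"
    using w by (simp add: compose_def vec_eq_iff algebra_simps)
  then show "\<exists>z. compose N f g w - w = k *s z" by blast
qed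

lemma cong_id_inverse:
  assumes f: "f \<in> carrier (O_sub B N)" "cong_id k N f"
  shows "cong_id k N (O_sub_inverse f)"
  unfolding cong_id_def
proof
  fix w assume w: "w \<in> N"
  define v where "v = O_sub_inverse f w"
  have "v \<in> N" unfolding v_def by (rule O_sub_mem[OF O_sub_inverse_mem[OF f(1)] w])
  then obtain z where "f v - v = k *s z" using f(2) unfolding cong_id_def by blast
  moreover have "f v = w"
    using fun_cong[OF O_sub_inverse_right[OF f(1)], of w] w by (simp add: compose_def v_def)
  ultimately have "O_sub_inverse f w - w = k *s (- z)"
    by (metis v_def minus_diff_eq vector_smult_lneg vector_sneg_minus1 vector_smult_assoc mult.commute)
  then show "\<exists>z. O_sub_inverse f w - w = k *s z" by blast
qed

end

definition reflection_factors :: "int^'n^'n \<Rightarrow> int^'n^'n \<Rightarrow> (real^'n) list" where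
  "reflection_factors B g = (SOME vs. anisotropic (imat B) vs \<and>
     (\<lambda>x. (imat g :: real^'n^'n) *v x) = reflection_prod (imat B) vs)"

text \<open>The sign of \<open>\<Prod> (- v\<^sub>i\<^sup>2 / 2)\<close> for one chosen factorization into reflections; only
  comparisons of this sign are used.\<close>
definition spinor_positive :: "int^'n^'n \<Rightarrow> int^'n^'n \<Rightarrow> bool" where
  "spinor_positive B g \<longleftrightarrow>
     0 < prod_list (map (\<lambda>v. - bform (imat B) v v / 2) (reflection_factors B g))"

context
  fixes B :: "int^'n^'n"
  assumes symB: "transpose B = B" and detB: "det B \<noteq> 0"
begin

lemma symmetric_imat: "transpose (imat B :: real^'n^'n) = imat B"
  using symB by (simp flip: imat_transpose)

lemma reflection_factors:
  assumes "transpose g ** B ** g = B"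
  shows "anisotropic (imat B) (reflection_factors B g)"
    "(\<lambda>x. (imat g :: real^'n^'n) *v x) = reflection_prod (imat B) (reflection_factors B g)"
proof -
  have "\<exists>vs. anisotropic (imat B) vs \<and> (\<lambda>x. (imat g :: real^'n^'n) *v x) = reflection_prod (imat B) vs"
  proof (rule cartan_dieudonne[OF symmetric_imat])
    show "det (imat B :: real^'n^'n) \<noteq> 0" using detB by (simp add: det_imat)
    show "transpose (imat g) ** (imat B :: real^'n^'n) ** imat g = imat B"
      using assms by (simp flip: imat_transpose imat_mult)
  qed
  then show "anisotropic (imat B) (reflection_factors B g)"
    "(\<lambda>x. (imat g :: real^'n^'n) *v x) = reflection_prod (imat B) (reflection_factors B g)"
    unfolding reflection_factors_def by (metis (mono_tags, lifting) someI_ex)+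
qed

lemma real_spinor_norm_one_mult_inverse:
  assumes g: "transpose g ** B ** g = B" and h: "transpose h ** B ** h = B"
    and h': "h ** h' = mat 1" and sign: "spinor_positive B g = spinor_positive B h"
  shows "real_spinor_norm_one B (g ** h')"
proof -
  define \<phi> where "\<phi> = (\<lambda>v::real^'n. - bform (imat B) v v / 2)"
  define va where "va = reflection_factors B g"
  define vb where "vb = reflection_factors B h"
  note va = reflection_factors[OF g, folded va_def] and vb = reflection_factors[OF h, folded vb_def]
  have "(\<lambda>x. (imat h' :: real^'n^'n) *v x)
      = (reflection_prod (imat B) (rev vb) \<circ> reflection_prod (imat B) vb) \<circ> (\<lambda>x. imat h' *v x)"
    using reflection_prod_rev_inverse[OF vb(1)] by simp
  also have "\<dots> = reflection_prod (imat B) (rev vb)"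
    unfolding vb(2)[symmetric] using h'
    by (simp add: fun_eq_iff matrix_vector_mul_assoc imat_mat flip: imat_mult)
  finally have h'_factors: "(\<lambda>x. (imat h' :: real^'n^'n) *v x) = reflection_prod (imat B) (rev vb)" .
  have nonzero: "prod_list (map \<phi> vs) \<noteq> 0" if "anisotropic (imat B) vs" for vs
    using that unfolding anisotropic_def by (induction vs) (auto simp: \<phi>_def)
  have "0 < prod_list (map \<phi> va) \<longleftrightarrow> 0 < prod_list (map \<phi> vb)"
    using sign by (simp add: spinor_positive_def \<phi>_def va_def vb_def)
  then have "0 < prod_list (map \<phi> va) * prod_list (map \<phi> vb)"
    using nonzero[OF va(1)] nonzero[OF vb(1)] by (auto simp: zero_less_mult_iff)
  then have "0 < prod_list (map \<phi> (va @ rev vb))"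
    by (simp flip: rev_map)
  moreover have "(\<lambda>x. (imat (g ** h') :: real^'n^'n) *v x) = reflection_prod (imat B) (va @ rev vb)"
    using va(2) h'_factors
    by (simp add: reflection_prod_append fun_eq_iff imat_mult flip: matrix_vector_mul_assoc)
  moreover have "anisotropic (imat B) (va @ rev vb)"
    using va(1) vb(1) by (auto simp: anisotropic_def)
  ultimately show ?thesis
    unfolding real_spinor_norm_one_def
    by (intro exI[of _ "va @ rev vb"]) (simp add: \<phi>_def anisotropic_def reflection_prod_def)
qed

end

lemma int_submodule_orth_compl: "int_submodule (orth_compl B J)"
  by unfold_locales (simp_all add: orth_compl_def bform_add_left bform_smult_left)

definition matrix_restrict :: "(int^'n) set \<Rightarrow> int^'n^'n \<Rightarrow> int^'n \<Rightarrow> int^'n" where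
  "matrix_restrict N g = restrict (\<lambda>x. g *v x) N"

lemma Gamma_eq_image: "Gamma B J Mo = matrix_restrict (orth_compl B J) ` Mo_fix Mo J"
  by (simp add: Gamma_def matrix_restrict_def)

lemma O_L_isometry: "g \<in> O_L B \<Longrightarrow> bform B (g *v x) (g *v y) = bform B x y"
  by (simp add: bform_mult_vec_both O_L_def)

lemma O_L_fixing_maps_orth_compl:
  assumes "g \<in> O_L B" "\<forall>m. g *v (J *v m) = J *v m" "x \<in> orth_compl B J"
  shows "g *v x \<in> orth_compl B J"
  using O_L_isometry[OF assms(1), of x "J *v _"] assms(2,3) by (simp add: orth_compl_def)

locale monodromy_group =
  fixes B :: "int^'n^'n" and Mo :: "(int^'n^'n) set"
  assumes Mo_sub: "Mo \<subseteq> O_L B" and Mo_one: "mat 1 \<in> Mo"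
    and Mo_mult: "\<forall>g\<in>Mo. \<forall>h\<in>Mo. g ** h \<in> Mo"
    and Mo_inv: "\<forall>g\<in>Mo. \<exists>h\<in>Mo. g ** h = mat 1"
begin

lemma Mo_fix_inverse:
  assumes g: "g \<in> Mo_fix Mo J" shows "\<exists>h\<in>Mo_fix Mo J. g ** h = mat 1 \<and> h ** g = mat 1"
proof -
  have gJ: "g \<in> Mo" "\<forall>m. g *v (J *v m) = J *v m" using g by (auto simp: Mo_fix_def)
  obtain h where h: "h \<in> Mo" "g ** h = mat 1" using Mo_inv gJ(1) by blast
  obtain h' where h': "g ** h' = mat 1" "h' ** g = mat 1"
    using Mo_sub gJ(1) unfolding O_L_def by blast
  have "h' = h" by (metis h(2) h'(2) matrix_mul_assoc matrix_mul_lid matrix_mul_rid)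
  with h' have "h ** g = mat 1" by simp
  moreover have "h *v (J *v m) = J *v m" for m
    using gJ(2) \<open>h ** g = mat 1\<close> by (metis matrix_vector_mul_assoc matrix_vector_mul_lid)
  ultimately show ?thesis using h by (auto simp: Mo_fix_def)
qed

context
  fixes J :: "int^'m^'n"
begin

interpretation int_submodule "orth_compl B J"
  by (rule int_submodule_orth_compl)

lemma matrix_restrict_mem_O_sub:
  assumes g: "g \<in> Mo_fix Mo J"
  shows "matrix_restrict (orth_compl B J) g \<in> carrier (O_sub B (orth_compl B J))"
proof -
  have gJ: "g \<in> O_L B" "\<forall>m. g *v (J *v m) = J *v m" using g Mo_sub by (auto simp: Mo_fix_def)
  obtain h where h: "h \<in> Mo_fix Mo J" "g ** h = mat 1" "h ** g = mat 1"
    using Mo_fix_inverse[OF g] by blast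
  have hJ: "h \<in> O_L B" "\<forall>m. h *v (J *v m) = J *v m" using h(1) Mo_sub by (auto simp: Mo_fix_def)
  show ?thesis unfolding carrier_O_sub_iff matrix_restrict_def
  proof (intro conjI ballI)
    show "bij_betw (restrict (\<lambda>x. g *v x) (orth_compl B J)) (orth_compl B J) (orth_compl B J)"
      by (rule bij_betw_byWitness[where f'="\<lambda>x. h *v x"])
        (use O_L_fixing_maps_orth_compl[OF gJ] O_L_fixing_maps_orth_compl[OF hJ] h(2,3) in
          \<open>auto simp: matrix_vector_mul_assoc\<close>)
  qed (simp_all add: add_mem matrix_vector_right_distrib O_L_isometry[OF gJ(1)])
qed

lemma matrix_restrict_mult:
  assumes "h \<in> Mo_fix Mo J"
  shows "compose (orth_compl B J) (matrix_restrict (orth_compl B J) g) (matrix_restrict (orth_compl B J) h)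
    = matrix_restrict (orth_compl B J) (g ** h)"
  using assms Mo_sub O_L_fixing_maps_orth_compl[of h]
  by (auto simp: Mo_fix_def compose_def matrix_restrict_def fun_eq_iff matrix_vector_mul_assoc)

lemma subgroup_Gamma: "subgroup (Gamma B J Mo) (O_sub B (orth_compl B J))"
proof (rule group.subgroupI[OF group_O_sub])
  show "Gamma B J Mo \<subseteq> carrier (O_sub B (orth_compl B J))"
    unfolding Gamma_eq_image using matrix_restrict_mem_O_sub by auto
  show "Gamma B J Mo \<noteq> {}"
    unfolding Gamma_eq_image using Mo_one by (auto simp: Mo_fix_def)
  fix a b assume "a \<in> Gamma B J Mo" "b \<in> Gamma B J Mo"
  then obtain g g' where g: "g \<in> Mo_fix Mo J" "a = matrix_restrict (orth_compl B J) g"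
    and g': "g' \<in> Mo_fix Mo J" "b = matrix_restrict (orth_compl B J) g'"
    unfolding Gamma_eq_image by auto
  obtain h where h: "h \<in> Mo_fix Mo J" "g ** h = mat 1" "h ** g = mat 1"
    using Mo_fix_inverse[OF g(1)] by blast
  have "inv\<^bsub>O_sub B (orth_compl B J)\<^esub> a = matrix_restrict (orth_compl B J) h"
  proof (rule group.inv_equality[OF group_O_sub])
    show "matrix_restrict (orth_compl B J) h \<otimes>\<^bsub>O_sub B (orth_compl B J)\<^esub> a
        = \<one>\<^bsub>O_sub B (orth_compl B J)\<^esub>"
      using matrix_restrict_mult[OF g(1), of h] h(3) g(2) by (simp add: matrix_restrict_def id_def)
  qed (use g h matrix_restrict_mem_O_sub in simp_all)
  then show "inv\<^bsub>O_sub B (orth_compl B J)\<^esub> a \<in> Gamma B J Mo"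
    unfolding Gamma_eq_image using h by auto
  show "a \<otimes>\<^bsub>O_sub B (orth_compl B J)\<^esub> b \<in> Gamma B J Mo"
    unfolding Gamma_eq_image using g g' matrix_restrict_mult Mo_mult
    by (auto simp: Mo_fix_def matrix_vector_mul_assoc[symmetric])
qed

end

end

section \<open>Extending isometries of the orthogonal complement\<close>

text \<open>\<open>D\<close> and \<open>E\<close> are \<open>d\<close> and \<open>e\<close> times the inverses of the Gram matrices of \<open>M\<close> and \<open>L\<close>.\<close>
locale orthogonal_splitting =
  fixes B :: "int^'n^'n" and J :: "int^'m^'n" and d e :: int and D :: "int^'m^'m" and E :: "int^'n^'n"
  assumes sym: "transpose B = B" and nondegenerate: "det B \<noteq> 0"
    and d_pos: "d > 0" and e_pos: "e > 0"
    and D_right: "(transpose J ** B ** J) ** D = mat d" and D_left: "D ** (transpose J ** B ** J) = mat d"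
    and E_left: "E ** B = mat e"
begin

abbreviation N :: "(int^'n) set" where "N \<equiv> orth_compl B J"

sublocale int_submodule N
  by (rule int_submodule_orth_compl)

lemma orth_compl_orth: "x \<in> N \<Longrightarrow> bform B x (J *v m) = 0"
  by (simp add: orth_compl_def)

lemma orth_compl_orth': "x \<in> N \<Longrightarrow> bform B (J *v m) x = 0"
  using orth_compl_orth bform_commute[OF sym] by metis

lemma bform_J_right: "bform B x (J *v m) = (\<Sum>k\<in>UNIV. (transpose J *v (B *v x))$k * m$k)"
proof -
  have "bform B x (J *v m) = bform B (J *v m) x" by (rule bform_commute[OF sym])
  also have "\<dots> = (\<Sum>k\<in>UNIV. m$k * (transpose J *v (B *v x))$k)"
    unfolding bform_mult_vec sum_transpose_mult_vec ..
  finally show ?thesis by (simp add: mult.commute)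
qed

lemma orth_compl_transpose_J: "x \<in> N \<Longrightarrow> transpose J *v (B *v x) = 0"
  using orth_compl_orth[of x "axis _ 1"] unfolding bform_J_right
  by (simp add: vec_eq_iff axis_def if_distrib[where f="\<lambda>a. _ * a"] cong: if_cong)

text \<open>\<open>P\<close> and \<open>Q\<close> are \<open>d\<close> times the orthogonal projections onto \<open>N\<^sub>\<rat>\<close> and \<open>j(M)\<^sub>\<rat>\<close>.\<close>
definition Q :: "int^'n^'n" where "Q = J ** D ** transpose J ** B"

definition P :: "int^'n^'n" where "P = mat d - Q"

lemma Q_mult_vec: "Q *v x = J *v (D *v (transpose J *v (B *v x)))"
  by (simp add: Q_def matrix_vector_mul_assoc matrix_mul_assoc)

lemma Q_J: "Q *v (J *v m) = d *s (J *v m)"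
proof -
  have "Q ** J = J ** (D ** (transpose J ** B ** J))" by (simp add: Q_def matrix_mul_assoc)
  then have "Q ** J = J ** mat d" by (simp add: D_left)
  then show ?thesis by (metis matrix_vector_mul_assoc mat_mult_vec matrix_vector_mult_smult)
qed

lemma Q_orth_compl: "x \<in> N \<Longrightarrow> Q *v x = 0"
  by (metis Q_mult_vec orth_compl_transpose_J matrix_vector_mult_0_right)

lemma P_plus_Q: "P *v x + Q *v x = d *s x"
  by (simp add: P_def matrix_vector_mult_diff_rdistrib mat_mult_vec)

lemma P_orth_compl: "x \<in> N \<Longrightarrow> P *v x = d *s x"
  using P_plus_Q[of x] Q_orth_compl by simp

lemma P_J: "P *v (J *v m) = 0"
  using P_plus_Q[of "J *v m"] Q_J by simp

lemma P_mem: "P *v x \<in> N"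
proof -
  have "bform B (Q *v x) (J *v m) = d * bform B x (J *v m)" for m
  proof -
    define w where "w = transpose J *v (B *v x)"
    have sym_M: "transpose (transpose J ** B ** J) = transpose J ** B ** J"
      by (simp add: matrix_transpose_mul sym matrix_mul_assoc)
    have "bform B (Q *v x) (J *v m) = bform (transpose J ** B ** J) m (D *v w)"
      unfolding Q_mult_vec w_def bform_mult_vec_both by (rule bform_commute[OF sym_M])
    also have "\<dots> = (\<Sum>i\<in>UNIV. m$i * (d *s w)$i)"
      unfolding bform_mult_vec by (simp add: matrix_vector_mul_assoc D_right mat_mult_vec)
    also have "\<dots> = d * bform B x (J *v m)"
      unfolding bform_J_right w_def by (simp add: sum_distrib_left mult_ac)
    finally show ?thesis .
  qed
  moreover have "P *v x = d *s x - Q *v x" using P_plus_Q[of x] by (simp add: algebra_simps)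
  ultimately show ?thesis by (simp add: orth_compl_def bform_diff_left bform_smult_left)
qed

lemma Q_range: "\<exists>u. Q *v x = J *v u"
  using Q_mult_vec by blast

definition lift_matrix :: "(int^'n \<Rightarrow> int^'n) \<Rightarrow> int^'n^'n" where
  "lift_matrix f = (\<chi> i j. f (P *v axis j 1) $ i)"

lemma lift_matrix_mult_vec:
  assumes f: "f \<in> carrier (O_sub B N)" shows "lift_matrix f *v x = f (P *v x)"
proof -
  have "lift_matrix f *v x = (\<Sum>j\<in>UNIV. x$j *s f (P *v axis j 1))"
    by (subst matrix_mult_sum) (simp add: column_def lift_matrix_def)
  also have "\<dots> = f (\<Sum>j\<in>UNIV. x$j *s (P *v axis j 1))"
    by (subst O_sub_sum[OF f]) (simp_all add: smult_mem P_mem O_sub_smult[OF f P_mem])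
  also have "(\<Sum>j\<in>UNIV. x$j *s (P *v axis j 1)) = P *v x"
  proof -
    have "P *v axis j 1 = column j P" for j
      by (simp add: vec_eq_iff column_def matrix_vector_mult_axis)
    then show ?thesis by (simp add: matrix_mult_sum)
  qed
  finally show ?thesis .
qed

text \<open>For \<open>f \<equiv> id\<close> modulo \<open>d e\<close> on \<open>N\<close>, the matrix \<open>lift_matrix f - P\<close> is divisible by \<open>d e\<close>, and
  \<open>extension f\<close> is the integral matrix of \<open>f \<oplus> id\<^bsub>j(M)\<^esub>\<close>, congruent to \<open>1\<close> modulo \<open>e\<close>.\<close>
definition extension :: "(int^'n \<Rightarrow> int^'n) \<Rightarrow> int^'n^'n" where
  "extension f = mat 1 + (\<chi> i j. e * ((lift_matrix f - P)$i$j div (d * e)))"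

context
  fixes f assumes f: "f \<in> carrier (O_sub B N)" and f_cong: "cong_id (d * e) N f"
begin

lemma extension_scaled: "d *s (extension f *v x) = f (P *v x) + Q *v x"
proof -
  have dvd: "(d * e) * ((lift_matrix f - P)$i$j div (d * e)) = (lift_matrix f - P)$i$j" for i j
  proof -
    obtain z where "f (P *v axis j 1) - P *v axis j 1 = (d * e) *s z"
      using f_cong P_mem unfolding cong_id_def by blast
    moreover have "(lift_matrix f - P)$i$j = (f (P *v axis j 1) - P *v axis j 1)$i"
      by (simp add: lift_matrix_def matrix_vector_mult_axis)
    ultimately show ?thesis by simp
  qed
  define R where "R = (\<chi> i j. e * ((lift_matrix f - P)$i$j div (d * e)))"
  have "(d *s (R *v x))$i = ((lift_matrix f - P) *v x)$i" for i
  proof -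
    have "(d *s (R *v x))$i = (\<Sum>j\<in>UNIV. ((d * e) * ((lift_matrix f - P)$i$j div (d * e))) * x$j)"
      by (simp add: R_def matrix_vector_mult_def sum_distrib_left mult_ac)
    also have "\<dots> = ((lift_matrix f - P) *v x)$i"
      by (simp only: dvd) (simp add: matrix_vector_mult_def)
    finally show ?thesis .
  qed
  then have R: "d *s (R *v x) = (lift_matrix f - P) *v x" by (simp add: vec_eq_iff)
  have "extension f *v x = x + R *v x"
    by (simp add: extension_def R_def matrix_vector_mult_add_rdistrib)
  then have "d *s (extension f *v x) = d *s x + d *s (R *v x)"
    by (simp add: vec_eq_iff algebra_simps)
  also have "\<dots> = d *s x + (lift_matrix f - P) *v x" by (simp only: R)
  also have "\<dots> = f (P *v x) + Q *v x"
    by (simp add: matrix_vector_mult_diff_rdistrib lift_matrix_mult_vec[OF f] flip: P_plus_Q)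
  finally show ?thesis .
qed

lemma extension_orth_compl:
  assumes w: "w \<in> N" shows "extension f *v w = f w"
proof (rule smult_cancel_int)
  have "d *s (extension f *v w) = f (d *s w)"
    unfolding extension_scaled P_orth_compl[OF w] Q_orth_compl[OF w] by simp
  then show "d *s (extension f *v w) = d *s f w"
    by (simp only: O_sub_smult[OF f w])
qed (use d_pos in simp)

lemma extension_J: "extension f *v (J *v m) = J *v m"
proof (rule smult_cancel_int)
  have "f 0 = 0" using O_sub_smult[OF f zero_mem, of 0] by simp
  then show "d *s (extension f *v (J *v m)) = d *s (J *v m)"
    unfolding extension_scaled P_J Q_J by simp
qed (use d_pos in simp)

lemma extension_Q: "extension f *v (Q *v x) = Q *v x"
  using Q_range[of x] extension_J by auto

lemma extension_isometry: "transpose (extension f) ** B ** extension f = B"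
proof (rule matrix_eq_by_bform)
  fix x y
  obtain u v where u: "Q *v x = J *v u" and v: "Q *v y = J *v v" using Q_range by metis
  have cross: "bform B a (Q *v y) = 0" "bform B (Q *v x) a = 0" if "a \<in> N" for a
    using orth_compl_orth[OF that] orth_compl_orth'[OF that] by (simp_all add: u v)
  have "d * d * bform B (extension f *v x) (extension f *v y)
      = bform B (d *s (extension f *v x)) (d *s (extension f *v y))"
    by (simp add: bform_smult_left bform_smult_right)
  also have "\<dots> = bform B (P *v x) (P *v y) + bform B (Q *v x) (Q *v y)"
    unfolding extension_scaled
    using cross O_sub_isometry[OF f P_mem P_mem] O_sub_mem[OF f P_mem]
    by (simp add: bform_add_left bform_add_right)
  also have "\<dots> = bform B (d *s x) (d *s y)"
    unfolding P_plus_Q[symmetric] using cross P_mem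
    by (simp add: bform_add_left bform_add_right)
  finally have "bform B (extension f *v x) (extension f *v y) = bform B x y"
    using d_pos by (simp add: bform_smult_left bform_smult_right)
  then show "bform (transpose (extension f) ** B ** extension f) x y = bform B x y"
    by (simp add: bform_mult_vec_both)
qed

text \<open>If \<open>y \<in> L\<^sup>*\<close> then \<open>e y = E (B y) \<in> L\<close>, and \<open>extension f - 1\<close> is \<open>e\<close> times an integer matrix.\<close>
lemma extension_trivial_on_discr: "trivial_on_discr B (extension f)"
  unfolding trivial_on_discr_def
proof (intro allI impI)
  fix y :: "rat^'n" assume dual: "\<forall>x::int^'n. bform (imat B) y (ivec x) \<in> \<int>"
  have "(imat B *v y)$k \<in> \<int>" for k
  proof -
    have "(ivec (axis k 1) :: rat^'n) = axis k 1" by (simp add: ivec_def axis_def vec_eq_iff)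
    moreover have "B$i$k = B$k$i" for i by (metis sym transpose_def vec_lambda_beta)
    ultimately have "bform (imat B) y (ivec (axis k 1)) = (imat B *v y)$k"
      by (simp add: bform_axis_right matrix_vector_mult_def imat_def mult.commute)
    then show ?thesis using dual by metis
  qed
  then have "\<exists>z. (imat B *v y)$k = of_int z" for k by (metis Ints_cases)
  then obtain z :: "int^'n" where z: "ivec z = imat B *v y"
    unfolding ivec_def vec_eq_iff by (metis vec_lambda_beta)
  have ey: "of_int e *s y = (ivec (E *v z) :: rat^'n)"
    by (simp add: imat_mult_vec z matrix_vector_mul_assoc E_left imat_mat mat_mult_vec flip: imat_mult)
  define R where "R = (\<chi> i j. (lift_matrix f - P)$i$j div (d * e))"
  have "(imat (extension f) :: rat^'n^'n) = mat 1 + imat (\<chi> i j. e * R$i$j)"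
    by (simp add: extension_def R_def imat_def vec_eq_iff mat_def)
  moreover have "(imat (\<chi> i j. e * R$i$j) :: rat^'n^'n) *v y = imat R *v (of_int e *s y)"
    by (simp add: imat_def matrix_vector_mult_def vec_eq_iff sum_distrib_left mult_ac)
  ultimately have "(imat (extension f) :: rat^'n^'n) *v y - y = imat R *v (of_int e *s y)"
    by (simp add: matrix_vector_mult_add_rdistrib)
  then show "\<exists>z. (imat (extension f) :: rat^'n^'n) *v y - y = ivec z"
    unfolding ey by (metis imat_mult_vec)
qed

end

lemma extension_id: "extension (restrict id N) = mat 1"
proof -
  have "extension (restrict id N) *v x = x" for x
  proof (rule smult_cancel_int)
    show "d *s (extension (restrict id N) *v x) = d *s x"
      using extension_scaled[OF id_mem_O_sub cong_id_id] P_mem[of x] P_plus_Q[of x] by simp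
  qed (use d_pos in simp)
  then show ?thesis by (simp add: matrix_eq)
qed

lemma extension_compose:
  assumes f: "f \<in> carrier (O_sub B N)" "cong_id (d * e) N f"
    and g: "g \<in> carrier (O_sub B N)" "cong_id (d * e) N g"
  shows "extension (compose N f g) = extension f ** extension g"
proof -
  have fg: "compose N f g \<in> carrier (O_sub B N)" "cong_id (d * e) N (compose N f g)"
    using compose_mem_O_sub[OF f(1) g(1)] cong_id_compose[OF g(1) f(2) g(2)] .
  have "extension (compose N f g) *v x = extension f *v (extension g *v x)" for x
  proof (rule smult_cancel_int)
    have "d *s (extension f *v (extension g *v x)) = extension f *v (g (P *v x) + Q *v x)"
      by (simp flip: matrix_vector_mult_smult extension_scaled[OF g])
    also have "\<dots> = f (g (P *v x)) + Q *v x"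
      by (simp add: matrix_vector_right_distrib extension_orth_compl[OF f] O_sub_mem[OF g(1) P_mem]
          extension_Q[OF f])
    also have "\<dots> = d *s (extension (compose N f g) *v x)"
      using extension_scaled[OF fg, of x] P_mem[of x] by (simp add: compose_def)
    finally show "d *s (extension (compose N f g) *v x) = d *s (extension f *v (extension g *v x))" ..
  qed (use d_pos in simp)
  then show ?thesis by (simp add: matrix_eq matrix_vector_mul_assoc)
qed

lemma extension_inverse:
  assumes f: "f \<in> carrier (O_sub B N)" "cong_id (d * e) N f"
  shows "extension f ** extension (O_sub_inverse f) = mat 1"
    "extension (O_sub_inverse f) ** extension f = mat 1"
  using extension_compose[OF f O_sub_inverse_mem[OF f(1)] cong_id_inverse[OF f]]
    extension_compose[OF O_sub_inverse_mem[OF f(1)] cong_id_inverse[OF f] f]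
  by (simp_all add: O_sub_inverse_right[OF f(1)] O_sub_inverse_left[OF f(1)] extension_id)

lemma extension_in_O_L:
  assumes "f \<in> carrier (O_sub B N)" "cong_id (d * e) N f"
  shows "extension f \<in> O_L B"
  unfolding O_L_def using extension_inverse[OF assms] extension_isometry[OF assms] by blast

lemma det_extension:
  assumes "f \<in> carrier (O_sub B N)" "cong_id (d * e) N f"
  shows "det (extension f) \<in> {1, -1}"
  using det_mul[of "extension f" "extension (O_sub_inverse f)"] extension_inverse(1)[OF assms]
  by (auto simp: zmult_eq_1_iff)

definition lift_residue :: "(int^'n \<Rightarrow> int^'n) \<Rightarrow> int^'n^'n" where
  "lift_residue f = (\<chi> i j. lift_matrix f $ i $ j mod (d * d * e))"

lemma finite_lift_residue_image: "finite (lift_residue ` A)"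
proof (rule finite_subset)
  show "lift_residue ` A \<subseteq> {M. \<forall>i j. M$i$j \<in> {0..<d * d * e}}"
    using d_pos e_pos by (auto simp: lift_residue_def)
qed (rule finite_matrices_with_entries_in, simp)

text \<open>On \<open>N\<close> the lift is \<open>d\<close> times the map itself, hence the modulus \<open>d \<cdot> d e\<close>.\<close>
lemma cong_id_of_lift_residue_eq:
  assumes f: "f \<in> carrier (O_sub B N)" and g: "g \<in> carrier (O_sub B N)"
    and eq: "lift_residue f = lift_residue g"
  shows "cong_id (d * e) N (compose N f (O_sub_inverse g))"
  unfolding cong_id_def
proof
  fix w assume w: "w \<in> N"
  define x where "x = O_sub_inverse g w"
  have x: "x \<in> N" unfolding x_def by (rule O_sub_mem[OF O_sub_inverse_mem[OF g] w])
  have gx: "g x = w"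
    using fun_cong[OF O_sub_inverse_right[OF g], of w] w by (simp add: compose_def x_def)
  define W where "W = (\<chi> i j. (lift_matrix f - lift_matrix g)$i$j div (d * d * e))"
  have "(lift_matrix f - lift_matrix g)$i$j = (d * d * e) * W$i$j" for i j
    using arg_cong[where f="\<lambda>M. M$i$j", OF eq] unfolding lift_residue_def W_def
    by (simp add: mod_eq_dvd_iff)
  then have lift_diff: "lift_matrix f - lift_matrix g = (\<chi> i j. (d * d * e) * W$i$j)"
    by (simp add: vec_eq_iff)
  have "d *s (f x - g x) = f (P *v x) - g (P *v x)"
    unfolding P_orth_compl[OF x] O_sub_smult[OF f x] O_sub_smult[OF g x] by (rule vector_ssub_ldistrib)
  also have "\<dots> = (lift_matrix f - lift_matrix g) *v x"
    by (simp add: matrix_vector_mult_diff_rdistrib lift_matrix_mult_vec f g)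
  also have "\<dots> = d *s ((d * e) *s (W *v x))"
    unfolding lift_diff by (simp add: vec_eq_iff matrix_vector_mult_def sum_distrib_left mult_ac)
  finally have "d *s (f x - g x) = d *s ((d * e) *s (W *v x))" .
  then have "f x - g x = (d * e) *s (W *v x)"
    by (rule smult_cancel_int[rotated]) (use d_pos in simp)
  then show "\<exists>z. compose N f (O_sub_inverse g) w - w = (d * e) *s z"
    using w gx by (auto simp: compose_def x_def)
qed

context
  fixes Mo assumes Mo: "monodromy_group B Mo" and tSO_plus: "tSO_plus B \<subseteq> Mo"
begin

lemma mult_inv_mem_Gamma:
  assumes k: "k \<in> carrier (O_sub B N)" "cong_id (d * e) N k"
    and l: "l \<in> carrier (O_sub B N)" "cong_id (d * e) N l"
    and det_eq: "det (extension k) = det (extension l)"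
    and spinor_eq: "spinor_positive B (extension k) = spinor_positive B (extension l)"
  shows "k \<otimes>\<^bsub>O_sub B N\<^esub> inv\<^bsub>O_sub B N\<^esub> l \<in> Gamma B J Mo"
proof -
  note l' = O_sub_inverse_mem[OF l(1)] cong_id_inverse[OF l]
  define t where "t = compose N k (O_sub_inverse l)"
  have t: "t \<in> carrier (O_sub B N)" "cong_id (d * e) N t"
    unfolding t_def using compose_mem_O_sub[OF k(1) l'(1)] cong_id_compose[OF l'(1) k(2) l'(2)] .
  have ext_t: "extension t = extension k ** extension (O_sub_inverse l)"
    unfolding t_def by (rule extension_compose[OF k l'])
  have "det (extension t) = 1"
    using det_eq det_mul[of "extension l" "extension (O_sub_inverse l)"] extension_inverse(1)[OF l]
    by (simp add: ext_t det_mul)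
  moreover have "real_spinor_norm_one B (extension t)"
    unfolding ext_t
    by (rule real_spinor_norm_one_mult_inverse[OF sym nondegenerate extension_isometry[OF k]
          extension_isometry[OF l] extension_inverse(1)[OF l] spinor_eq])
  ultimately have "extension t \<in> tSO_plus B"
    using extension_in_O_L[OF t] extension_trivial_on_discr[OF t] by (simp add: tSO_plus_def tO_plus_def)
  then have "extension t \<in> Mo_fix Mo J"
    using tSO_plus extension_J[OF t] by (auto simp: Mo_fix_def)
  moreover have "matrix_restrict N (extension t) = t"
    using extension_orth_compl[OF t] O_sub_extensional[OF t(1)]
    by (auto simp: matrix_restrict_def extensional_def)
  ultimately have "t \<in> Gamma B J Mo"
    unfolding Gamma_eq_image by (metis image_eqI)
  then show ?thesis by (simp add: t_def inv_O_sub l(1))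
qed

theorem arithmetic_subgroup_Gamma: "arithmetic_subgroup (Gamma B J Mo) (O_sub B N)"
proof -
  interpret monodromy_group B Mo by (rule Mo)
  define K where "K = {k \<in> carrier (O_sub B N). cong_id (d * e) N k}"
  have "finite (rcosets\<^bsub>O_sub B N\<^esub> Gamma B J Mo)"
  proof (rule group.finite_rcosets_if_classified_in_two_steps[OF group_O_sub subgroup_Gamma,
        where K = K and \<psi> = lift_residue
          and \<kappa> = "\<lambda>k. (det (extension k), spinor_positive B (extension k))"])
    show "finite ((\<lambda>k. (det (extension k), spinor_positive B (extension k))) ` K)"
      by (rule finite_subset[of _ "{1, -1} \<times> UNIV"]) (auto simp: K_def dest: det_extension)
    show "a \<otimes>\<^bsub>O_sub B N\<^esub> inv\<^bsub>O_sub B N\<^esub> b \<in> K"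
      if "a \<in> carrier (O_sub B N)" "b \<in> carrier (O_sub B N)" "lift_residue a = lift_residue b" for a b
      using that compose_mem_O_sub O_sub_inverse_mem cong_id_of_lift_residue_eq
      by (simp add: K_def inv_O_sub)
    show "k \<otimes>\<^bsub>O_sub B N\<^esub> inv\<^bsub>O_sub B N\<^esub> l \<in> Gamma B J Mo"
      if "k \<in> K" "l \<in> K"
        "(det (extension k), spinor_positive B (extension k)) = (det (extension l), spinor_positive B (extension l))"
      for k l
      using mult_inv_mem_Gamma[of k l] that by (simp add: K_def)
  qed (auto simp: K_def finite_lift_residue_image)
  then show ?thesis unfolding arithmetic_subgroup_def using subgroup_Gamma by blast
qed

end

end

theorem mainTheorem10:
  fixes B :: "int^'n^'n" and BM :: "int^'m^'m" and J :: "int^'m^'n"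
    and Mo :: "(int^'n^'n) set"
  assumes L: "has_pos_signature B 3" "even_lattice B"
    and M: "has_pos_signature BM 1"
    and j: "primitive_embedding B BM J"
    and Mo_sub: "Mo \<subseteq> O_L B"
    and Mo_one: "mat 1 \<in> Mo"
    and Mo_mult: "\<forall>g\<in>Mo. \<forall>h\<in>Mo. g ** h \<in> Mo"
    and Mo_inv: "\<forall>g\<in>Mo. \<exists>h\<in>Mo. g ** h = mat 1"
    and hyp: "tSO_plus B \<subseteq> Mo"
  shows "arithmetic_subgroup (Gamma B J Mo) (O_sub B (orth_compl B J))"
proof -
  have sym: "transpose B = B" and nondeg: "det B \<noteq> 0"
    using L(1) by (simp_all add: has_pos_signature_def symmetric_gram_def nondegenerate_def)
  have "det (transpose J ** B ** J) \<noteq> 0"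
    using M j by (simp add: has_pos_signature_def nondegenerate_def primitive_embedding_def)
  then obtain d D where d: "d > 0" "(transpose J ** B ** J) ** D = mat d" "D ** (transpose J ** B ** J) = mat d"
    by (rule exists_int_scaled_inverse)
  obtain e E where e: "e > 0" "B ** E = mat e" "E ** B = mat e"
    using nondeg by (rule exists_int_scaled_inverse)
  interpret orthogonal_splitting B J d e D E
    using sym nondeg d e by unfold_locales
  have "monodromy_group B Mo"
    using Mo_sub Mo_one Mo_mult Mo_inv by unfold_locales
  then show ?thesis using hyp by (rule arithmetic_subgroup_Gamma)
qed

end
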